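(* Let $t>0$ with $1/t$ a positive integer, let $n\ge 2t+\frac{9}{2t}+\frac92$, and let $s\ge 2$ be an integer such that $s/t$ is an integer and $n\ge s+\frac{s}{t}+1$. Then $$\lambda_1\big(D(K_1\vee(K_{n-1-\frac1t}+\tfrac1tK_1))\big)<\lambda_1\big(D(K_s\vee(K_{n-s-\frac st}+\tfrac stK_1))\big).$$
   Context: For a connected graph $G$, $D(G)$ is the distance matrix and $\lambda_1(D(G))$ its largest eigenvalue. $K_m$ is the complete graph, $+$ is disjoint union, $kK_1$ is $k$ isolated vertices, $\vee$ is the join (disjoint union plus all edges between the two parts). *)

theory Defs
  imports "Jordan_Normal_Form.Char_Poly"
begin

text \<open>Simple graphs on the vertex set {0..<N}, given by a symmetric irreflexive
adjacency predicate.\<close>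

definition is_walk :: "(nat \<Rightarrow> nat \<Rightarrow> bool) \<Rightarrow> nat list \<Rightarrow> bool" where
  "is_walk E xs = (xs \<noteq> [] \<and> (\<forall>i. i + 1 < length xs \<longrightarrow> E (xs ! i) (xs ! (i + 1))))"

definition gdist :: "(nat \<Rightarrow> nat \<Rightarrow> bool) \<Rightarrow> nat \<Rightarrow> nat \<Rightarrow> nat" where
  "gdist E u v = (LEAST d. \<exists>xs. is_walk E xs \<and> hd xs = u \<and> last xs = v \<and> length xs = d + 1)"

definition dist_matrix :: "nat \<Rightarrow> (nat \<Rightarrow> nat \<Rightarrow> bool) \<Rightarrow> real mat" where
  "dist_matrix N E = mat N N (\<lambda>(i, j). real (gdist E i j))"

definition lambda1 :: "real mat \<Rightarrow> real" where
  "lambda1 A = Max {x. eigenvalue A x}"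

text \<open>The graph K_s \<or> (K_m + k K_1) on vertices {0..<s+m+k}: vertices 0..<s form K_s,
vertices s..<s+m form K_m, vertices s+m..<s+m+k are the k isolated vertices of the
disjoint union; the join adds all edges between the first s vertices and the rest.\<close>
definition join_graph :: "nat \<Rightarrow> nat \<Rightarrow> nat \<Rightarrow> nat \<Rightarrow> nat \<Rightarrow> bool" where
  "join_graph s m k u v =
     (u < s + m + k \<and> v < s + m + k \<and> u \<noteq> v \<and>
      (u < s \<or> v < s \<or> (u < s + m \<and> v < s + m)))"

definition D_join :: "nat \<Rightarrow> nat \<Rightarrow> nat \<Rightarrow> real mat" where
  "D_join s m k = dist_matrix (s + m + k) (join_graph s m k)"

end

theory Submission
  imports Defs
begin

text \<open>The distance matrix of \<open>K\<^sub>s \<or> (K\<^sub>m + k K\<^sub>1)\<close> has only the entries 0, 1 and 2, and the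
  partition into the three vertex classes is equitable. Hence every root \<open>x\<close> of the cubic
  \<open>quotient_poly s m k\<close> yields the eigenvalue \<open>x - 1\<close>, with an eigenvector that is constant
  on the classes; the same vector, evaluated at a point \<open>x\<close> where the cubic is nonnegative and
  the vector positive, is a Collatz-Wielandt witness that all eigenvalues are at most \<open>x - 1\<close>.
  Both graphs of the theorem have \<open>n\<close> vertices, and at \<open>X = n + 3/t\<close> the cubic of the first
  graph is positive while that of the second is negative. So the largest eigenvalue of the
  first is at most \<open>X - 1\<close>, while the second has an eigenvalue beyond \<open>X - 1\<close>.\<close>

lemma is_walk_length_1_hd_last: "is_walk E xs \<Longrightarrow> length xs = 1 \<Longrightarrow> hd xs = last xs"
  by (cases xs) auto

lemma is_walk_length_2_edge: "is_walk E xs \<Longrightarrow> length xs = 2 \<Longrightarrow> E (hd xs) (last xs)"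
  unfolding is_walk_def by (cases xs; cases "tl xs") fastforce+

lemma gdist_refl: "gdist E u u = 0"
  unfolding gdist_def by (rule Least_eq_0) (auto intro!: exI[of _ "[u]"] simp: is_walk_def)

lemma gdist_edge:
  assumes "u \<noteq> v" "E u v"
  shows "gdist E u v = 1"
  unfolding gdist_def
proof (rule Least_equality)
  show "\<exists>xs. is_walk E xs \<and> hd xs = u \<and> last xs = v \<and> length xs = 1 + 1"
    using assms by (intro exI[of _ "[u, v]"]) (auto simp: is_walk_def nth_Cons')
next
  fix d assume "\<exists>xs. is_walk E xs \<and> hd xs = u \<and> last xs = v \<and> length xs = d + 1"
  then show "1 \<le> d" using assms(1) is_walk_length_1_hd_last by (cases d) fastforce+
qed

lemma gdist_two_step:
  assumes "u \<noteq> v" "\<not> E u v" "E u w" "E w v"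
  shows "gdist E u v = 2"
  unfolding gdist_def
proof (rule Least_equality)
  show "\<exists>xs. is_walk E xs \<and> hd xs = u \<and> last xs = v \<and> length xs = 2 + 1"
    using assms by (intro exI[of _ "[u, w, v]"]) (auto simp: is_walk_def nth_Cons')
next
  fix d assume "\<exists>xs. is_walk E xs \<and> hd xs = u \<and> last xs = v \<and> length xs = d + 1"
  then show "2 \<le> d"
    using assms(1,2) is_walk_length_1_hd_last is_walk_length_2_edge
    by (cases d; cases "d - 1") fastforce+
qed

lemma sum_const_except:
  assumes "finite A" "\<And>j. j \<in> A \<Longrightarrow> j \<noteq> i \<Longrightarrow> g j = C" "i \<in> A \<Longrightarrow> g i = (0::real)"
  shows "sum g A = C * (real (card A) - (if i \<in> A then 1 else 0))"
proof (cases "i \<in> A")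
  case True
  have "sum g A = g i + sum g (A - {i})" using True assms(1) by (simp add: sum.remove)
  also have "sum g (A - {i}) = sum (\<lambda>_. C) (A - {i})" using assms(2) by (intro sum.cong) auto
  moreover have "card A \<ge> 1" using True assms(1) by (auto simp: Suc_le_eq card_gt_0_iff)
  ultimately show ?thesis
    using True assms(3) by (simp add: card_Diff_singleton of_nat_diff algebra_simps)
next
  case False
  have "sum g A = sum (\<lambda>_. C) A" using assms(2) False by (intro sum.cong) auto
  then show ?thesis using False by simp
qed

lemma finite_eigenvalues:
  fixes A :: "real mat"
  assumes "A \<in> carrier_mat n n"
  shows "finite {x. eigenvalue A x}"
proof -
  have "char_poly A \<noteq> 0" using degree_monic_char_poly[OF assms] by auto
  then have "finite {x. poly (char_poly A) x = 0}" by (rule poly_roots_finite)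
  then show ?thesis using eigenvalue_root_char_poly[OF assms] by simp
qed

lemma eigenvalue_le_lambda1:
  fixes A :: "real mat"
  assumes "A \<in> carrier_mat n n" "eigenvalue A x"
  shows "x \<le> lambda1 A"
  unfolding lambda1_def using finite_eigenvalues[OF assms(1)] assms(2) by (intro Max_ge) auto

lemma lambda1_le:
  fixes A :: "real mat"
  assumes "A \<in> carrier_mat n n" "eigenvalue A y" "\<And>x. eigenvalue A x \<Longrightarrow> x \<le> U"
  shows "lambda1 A \<le> U"
  unfolding lambda1_def using finite_eigenvalues[OF assms(1)] assms(2,3) by (subst Max_le_iff) auto

text \<open>Collatz-Wielandt: compare an eigenvector \<open>v\<close> with \<open>w\<close> at a coordinate where
  \<open>\<bar>v $ i\<bar> / w $ i\<close> is maximal.\<close>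

lemma eigenvalue_abs_le_Collatz_Wielandt:
  fixes A :: "real mat"
  assumes A: "A \<in> carrier_mat n n"
    and nonneg: "\<And>i j. i < n \<Longrightarrow> j < n \<Longrightarrow> A $$ (i, j) \<ge> 0"
    and w: "w \<in> carrier_vec n" and w_pos: "\<And>i. i < n \<Longrightarrow> w $ i > 0"
    and Aw: "\<And>i. i < n \<Longrightarrow> (A *\<^sub>v w) $ i \<le> U * w $ i"
    and "eigenvalue A x"
  shows "\<bar>x\<bar> \<le> U"
proof -
  obtain v where v: "v \<in> carrier_vec n" "v \<noteq> 0\<^sub>v n" "A *\<^sub>v v = x \<cdot>\<^sub>v v"
    using assms(6) A unfolding eigenvalue_def eigenvector_def by auto
  obtain j where j: "j < n" "v $ j \<noteq> 0"
    using v(1,2) by (metis eq_vecI carrier_vecD index_zero_vec)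
  define r where "r i = \<bar>v $ i\<bar> / w $ i" for i
  define c where "c = Max (r ` {0..<n})"
  obtain i0 where i0: "i0 < n" "r i0 = c"
    using Max_in[of "r ` {0..<n}"] j(1) unfolding c_def by fastforce
  have bound: "\<bar>v $ i\<bar> \<le> c * w $ i" if "i < n" for i
  proof -
    have "r i \<le> c" unfolding c_def using that by (intro Max_ge) auto
    then show ?thesis using w_pos[OF that] unfolding r_def by (simp add: divide_le_eq)
  qed
  have "0 < \<bar>v $ j\<bar>" using j(2) by simp
  also have "\<dots> \<le> c * w $ j" by (rule bound[OF j(1)])
  finally have c_pos: "c > 0" using w_pos[OF j(1)] by (simp add: zero_less_mult_iff)
  have v_i0: "\<bar>v $ i0\<bar> = c * w $ i0" using i0 w_pos[OF i0(1)] unfolding r_def by (simp add: field_simps)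
  have "\<bar>x\<bar> * \<bar>v $ i0\<bar> = \<bar>\<Sum>j\<in>{0..<n}. A $$ (i0, j) * v $ j\<bar>"
    using arg_cong[OF v(3), of "\<lambda>u. u $ i0"] A v(1) i0(1) by (simp add: abs_mult scalar_prod_def)
  also have "\<dots> \<le> (\<Sum>j\<in>{0..<n}. A $$ (i0, j) * (c * w $ j))"
    using nonneg[OF i0(1)] bound
    by (intro order.trans[OF sum_abs] sum_mono) (auto simp: abs_mult intro: mult_left_mono)
  also have "\<dots> = c * (A *\<^sub>v w) $ i0"
    using A w i0 by (simp add: scalar_prod_def sum_distrib_left algebra_simps)
  also have "\<dots> \<le> U * \<bar>v $ i0\<bar>" using Aw[OF i0(1)] c_pos v_i0 by simp
  finally show ?thesis using v_i0 c_pos w_pos[OF i0(1)] by simp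
qed

definition join_dist :: "nat \<Rightarrow> nat \<Rightarrow> nat \<Rightarrow> nat \<Rightarrow> nat" where
  "join_dist s m i j =
     (if i = j then 0 else if i < s \<or> j < s \<or> (i < s + m \<and> j < s + m) then 1 else 2)"

lemma gdist_join_graph:
  assumes "s \<ge> 1" "i < s + m + k" "j < s + m + k"
  shows "gdist (join_graph s m k) i j = join_dist s m i j"
proof -
  consider "i = j" | "i \<noteq> j" "join_graph s m k i j" | "i \<noteq> j" "\<not> join_graph s m k i j"
    by blast
  then show ?thesis
  proof cases
    case 1
    then show ?thesis by (simp add: gdist_refl join_dist_def)
  next
    case 2
    then show ?thesis by (auto simp: gdist_edge join_dist_def join_graph_def)
  next
    case 3
    have "join_graph s m k i 0" "join_graph s m k 0 j"
      using assms 3 by (auto simp: join_graph_def)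
    with 3 have "gdist (join_graph s m k) i j = 2" by (intro gdist_two_step)
    with 3 show ?thesis by (auto simp: join_dist_def join_graph_def assms)
  qed
qed

lemma D_join_eq:
  assumes "s \<ge> 1"
  shows "D_join s m k = mat (s + m + k) (s + m + k) (\<lambda>(i, j). real (join_dist s m i j))"
  unfolding D_join_def dist_matrix_def by (rule eq_matI) (auto simp: gdist_join_graph[OF assms])

lemma D_join_carrier: "s \<ge> 1 \<Longrightarrow> D_join s m k \<in> carrier_mat (s + m + k) (s + m + k)"
  by (simp add: D_join_eq)

definition block_vec :: "nat \<Rightarrow> nat \<Rightarrow> real \<Rightarrow> real \<Rightarrow> real \<Rightarrow> nat \<Rightarrow> real" where
  "block_vec s m a b c i = (if i < s then a else if i < s + m then b else c)"

lemma D_join_mult_block_vec: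
  assumes s: "s \<ge> 1" and i: "i < s + m + k"
  shows "(D_join s m k *\<^sub>v vec (s + m + k) (block_vec s m a b c)) $ i
       = block_vec s m ((real s - 1) * a + real m * b + real k * c)
                       (real s * a + (real m - 1) * b + 2 * real k * c)
                       (real s * a + 2 * real m * b + 2 * (real k - 1) * c) i"
proof -
  let ?g = "\<lambda>j. real (join_dist s m i j) * block_vec s m a b c j"
  have "(D_join s m k *\<^sub>v vec (s + m + k) (block_vec s m a b c)) $ i = sum ?g {0..<s + m + k}"
    using i by (simp add: D_join_eq[OF s] scalar_prod_def)
  also have "\<dots> = sum ?g {0..<s} + sum ?g {s..<s + m} + sum ?g {s + m..<s + m + k}"
    by (simp add: sum.atLeastLessThan_concat)
  finally have row: "(D_join s m k *\<^sub>v vec (s + m + k) (block_vec s m a b c)) $ i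
      = sum ?g {0..<s} + sum ?g {s..<s + m} + sum ?g {s + m..<s + m + k}" .
  have diag: "?g i = 0" by (simp add: join_dist_def)
  consider "i < s" | "s \<le> i" "i < s + m" | "s + m \<le> i"
    by linarith
  then show ?thesis
  proof cases
    case 1
    have "sum ?g {0..<s} = a * (real s - 1)"
      by (subst sum_const_except[where C = a and i = i])
        (use 1 diag in \<open>auto simp: join_dist_def block_vec_def\<close>)
    moreover have "sum ?g {s..<s + m} = b * real m"
      by (subst sum_const_except[where C = b and i = i])
        (use 1 in \<open>auto simp: join_dist_def block_vec_def\<close>)
    moreover have "sum ?g {s + m..<s + m + k} = c * real k"
      by (subst sum_const_except[where C = c and i = i])
        (use 1 in \<open>auto simp: join_dist_def block_vec_def\<close>)
    ultimately show ?thesis using 1 row by (simp add: block_vec_def algebra_simps)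
  next
    case 2
    have "sum ?g {0..<s} = a * real s"
      by (subst sum_const_except[where C = a and i = i])
        (use 2 in \<open>auto simp: join_dist_def block_vec_def\<close>)
    moreover have "sum ?g {s..<s + m} = b * (real m - 1)"
      by (subst sum_const_except[where C = b and i = i])
        (use 2 diag in \<open>auto simp: join_dist_def block_vec_def\<close>)
    moreover have "sum ?g {s + m..<s + m + k} = 2 * c * real k"
      by (subst sum_const_except[where C = "2 * c" and i = i])
        (use 2 in \<open>auto simp: join_dist_def block_vec_def\<close>)
    ultimately show ?thesis using 2 row by (simp add: block_vec_def algebra_simps)
  next
    case 3
    have "sum ?g {0..<s} = a * real s"
      by (subst sum_const_except[where C = a and i = i])
        (use 3 in \<open>auto simp: join_dist_def block_vec_def\<close>)
    moreover have "sum ?g {s..<s + m} = 2 * b * real m"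
      by (subst sum_const_except[where C = "2 * b" and i = i])
        (use 3 in \<open>auto simp: join_dist_def block_vec_def\<close>)
    moreover have "sum ?g {s + m..<s + m + k} = 2 * c * (real k - 1)"
      by (subst sum_const_except[where C = "2 * c" and i = i])
        (use 3 i diag in \<open>auto simp: join_dist_def block_vec_def\<close>)
    ultimately show ?thesis using 3 row by (simp add: block_vec_def algebra_simps)
  qed
qed

text \<open>\<open>quotient_poly s m k (\<lambda> + 1) = -det (Q - \<lambda> I)\<close>, where \<open>Q\<close> is the \<open>3 \<times> 3\<close> quotient matrix
  read off from \<open>D_join_mult_block_vec\<close>.\<close>

definition quotient_poly :: "nat \<Rightarrow> nat \<Rightarrow> nat \<Rightarrow> real \<Rightarrow> real" where
  "quotient_poly s m k x =
     x * (x + 1 - 2 * real k) * (x - real s - real m)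
     - real k * ((real s + 4 * real m) * x - real m * real s)"

definition test_vec :: "nat \<Rightarrow> nat \<Rightarrow> nat \<Rightarrow> real \<Rightarrow> real vec" where
  "test_vec s m k x = vec (s + m + k)
     (block_vec s m (real k * (x + real m)) (real k * (2 * x - real s)) (x * (x - real s - real m)))"

lemma D_join_mult_test_vec:
  assumes "s \<ge> 1" and i: "i < s + m + k"
  shows "(D_join s m k *\<^sub>v test_vec s m k x) $ i
       = (x - 1) * test_vec s m k x $ i - (if i < s + m then 0 else quotient_poly s m k x)"
proof -
  define a where "a = real k * (x + real m)"
  define b where "b = real k * (2 * x - real s)"
  define c where "c = x * (x - real s - real m)"
  have "(real s - 1) * a + real m * b + real k * c = (x - 1) * a"
    "real s * a + (real m - 1) * b + 2 * real k * c = (x - 1) * b"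
    "real s * a + 2 * real m * b + 2 * (real k - 1) * c = (x - 1) * c - quotient_poly s m k x"
    unfolding a_def b_def c_def quotient_poly_def by (simp_all add: algebra_simps)
  then show ?thesis
    using i unfolding test_vec_def a_def[symmetric] b_def[symmetric] c_def[symmetric]
    by (simp add: D_join_mult_block_vec[OF assms] block_vec_def)
qed

lemma eigenvalue_D_join_of_root:
  assumes s: "s \<ge> 1" and "m \<ge> 1" "k \<ge> 1" and root: "quotient_poly s m k x = 0"
  shows "eigenvalue (D_join s m k) (x - 1)"
proof -
  let ?v = "test_vec s m k x"
  have eigen: "D_join s m k *\<^sub>v ?v = (x - 1) \<cdot>\<^sub>v ?v"
  proof (rule eq_vecI)
    fix i assume "i < dim_vec ((x - 1) \<cdot>\<^sub>v ?v)"
    then have i: "i < s + m + k" by (simp add: test_vec_def)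
    show "(D_join s m k *\<^sub>v ?v) $ i = ((x - 1) \<cdot>\<^sub>v ?v) $ i"
      using D_join_mult_test_vec[OF s i] root i by (simp add: test_vec_def)
  qed (use D_join_carrier[OF s, of m k] in \<open>simp add: test_vec_def\<close>)
  have entries: "?v $ 0 = real k * (x + real m)" "?v $ s = real k * (2 * x - real s)"
    using assms by (auto simp: test_vec_def block_vec_def)
  have "?v \<noteq> 0\<^sub>v (s + m + k)"
  proof
    assume "?v = 0\<^sub>v (s + m + k)"
    then have "?v $ 0 = 0" "?v $ s = 0" using assms by auto
    then have "x + real m = 0" "2 * x - real s = 0" using entries assms by auto
    then show False using assms by linarith
  qed
  moreover have "dim_row (D_join s m k) = s + m + k" using D_join_carrier[OF s, of m k] by simp
  ultimately show ?thesis
    unfolding eigenvalue_def eigenvector_def using eigen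
    by (intro exI[of _ ?v]) (simp add: test_vec_def)
qed

lemma quotient_poly_root_between:
  assumes "a \<le> b" "quotient_poly s m k a \<le> 0" "quotient_poly s m k b \<ge> 0"
  shows "\<exists>x\<ge>a. x \<le> b \<and> quotient_poly s m k x = 0"
proof -
  have "isCont (quotient_poly s m k) x" for x
    unfolding quotient_poly_def[abs_def] by (intro continuous_intros)
  then show ?thesis using IVT[of "quotient_poly s m k" a 0 b] assms by auto
qed

lemma quotient_poly_at_minus_m:
  "quotient_poly s m k (- real m) = - real m * (real m - 1) * (2 * real m + real s)"
  unfolding quotient_poly_def by (simp add: algebra_simps)

lemma quotient_poly_pos_large:
  assumes "Y \<ge> 8 * (real s + real m + real k) + 8"
  shows "quotient_poly s m k Y > 0"
proof -
  have Y: "Y > 0" using assms by simp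
  have "real k * ((real s + 4 * real m) * Y - real m * real s) \<le> (Y / 8) * ((Y / 2) * Y)"
  proof -
    have "real k * ((real s + 4 * real m) * Y - real m * real s) \<le> real k * ((real s + 4 * real m) * Y)"
      by (simp add: mult_left_mono)
    also have "\<dots> \<le> (Y / 8) * ((Y / 2) * Y)"
      using assms Y by (intro mult_mono) auto
    finally show ?thesis .
  qed
  also have "\<dots> < Y * (Y / 2) * (Y / 2)" using Y by (simp add: field_simps)
  also have "\<dots> \<le> Y * (Y + 1 - 2 * real k) * (Y - real s - real m)"
    using assms Y by (intro mult_mono) auto
  finally show ?thesis unfolding quotient_poly_def by linarith
qed

lemma D_join_has_eigenvalue:
  assumes "s \<ge> 1" "m \<ge> 1" "k \<ge> 1"
  shows "\<exists>x. eigenvalue (D_join s m k) x"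
proof -
  have "quotient_poly s m k (- real m) \<le> 0"
    using assms by (simp add: quotient_poly_at_minus_m mult_nonneg_nonneg)
  moreover have "quotient_poly s m k 0 \<ge> 0" unfolding quotient_poly_def by simp
  ultimately obtain x where "quotient_poly s m k x = 0"
    using quotient_poly_root_between[of "- real m" 0 s m k] by auto
  then show ?thesis using eigenvalue_D_join_of_root assms by blast
qed

lemma lambda1_D_join_le:
  assumes s: "s \<ge> 1" and "m \<ge> 1" "k \<ge> 1"
    and x: "x > real s + real m" and nonneg: "quotient_poly s m k x \<ge> 0"
  shows "lambda1 (D_join s m k) \<le> x - 1"
proof -
  let ?N = "s + m + k"
  have D: "D_join s m k \<in> carrier_mat ?N ?N" by (rule D_join_carrier[OF s])
  have "l \<le> x - 1" if "eigenvalue (D_join s m k) l" for l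
  proof -
    have "\<bar>l\<bar> \<le> x - 1"
    proof (rule eigenvalue_abs_le_Collatz_Wielandt[OF D _ _ _ _ that])
      show "D_join s m k $$ (i, j) \<ge> 0" if "i < ?N" "j < ?N" for i j
        using that by (simp add: D_join_eq[OF s])
      show "test_vec s m k x \<in> carrier_vec ?N" by (simp add: test_vec_def)
      show "test_vec s m k x $ i > 0" if "i < ?N" for i
        using that assms by (auto simp: test_vec_def block_vec_def)
      show "(D_join s m k *\<^sub>v test_vec s m k x) $ i \<le> (x - 1) * test_vec s m k x $ i"
        if "i < ?N" for i
        using D_join_mult_test_vec[OF s that] nonneg by simp
    qed
    then show ?thesis by simp
  qed
  then show ?thesis using lambda1_le[OF D] D_join_has_eigenvalue assms by blast
qed

lemma lambda1_D_join_gt: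
  assumes s: "s \<ge> 1" and "m \<ge> 1" "k \<ge> 1" and neg: "quotient_poly s m k x < 0"
  shows "x - 1 < lambda1 (D_join s m k)"
proof -
  define Y where "Y = max x (8 * (real s + real m + real k) + 8)"
  have "quotient_poly s m k Y > 0" by (rule quotient_poly_pos_large) (simp add: Y_def)
  then obtain r where r: "r \<ge> x" "quotient_poly s m k r = 0"
    using quotient_poly_root_between[of x Y] neg by (force simp: Y_def)
  then have "x < r" using neg by (cases "x = r") auto
  also have "r - 1 \<le> lambda1 (D_join s m k)"
    using eigenvalue_le_lambda1[OF D_join_carrier[OF s] eigenvalue_D_join_of_root] assms r(2) by blast
  finally show ?thesis by simp
qed

lemma quotient_poly_at_shift:
  assumes "real k = real s * q"
  shows "quotient_poly s m k (real s + real m + real k + 3 * q)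
       = q * ((real s + real m + real k + 3 * q)
                * (3 + 4 * real s + 9 * q - (real s)\<^sup>2 * q - 3 * (real s - 1) * real m)
              + (real s)\<^sup>2 * real m)"
  unfolding quotient_poly_def assms by (simp add: algebra_simps power2_eq_square)

lemma shift_cofactor_neg:
  fixes s :: nat and q m :: real
  assumes s: "s \<ge> 2" and q: "q \<ge> 1" and m: "m \<ge> 1"
    and large: "2 * q * (real s + m + real s * q) \<ge> 4 + 9 * q + 9 * q\<^sup>2"
  shows "(real s + m + real s * q + 3 * q)
           * (3 + 4 * real s + 9 * q - (real s)\<^sup>2 * q - 3 * (real s - 1) * m)
         + (real s)\<^sup>2 * m < 0"
proof -
  define X where "X = real s + m + real s * q + 3 * q"
  define c where "c = 3 * (real s - 1) * m + (real s)\<^sup>2 * q - 4 * real s - 9 * q - 3"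
  have "c \<ge> (real s)\<^sup>2 \<or> c \<ge> real s * m"
  proof -
    consider "s = 2" | "s = 3" | "s = 4" | "s \<ge> 5" using s by linarith
    then show ?thesis
    proof cases
      case 1
      have "q * (3 * m - 5 * q - 15) \<ge> 5 / 2 * (q - 3 / 2)\<^sup>2 + 3 / 8"
        using large 1 by (simp add: algebra_simps power2_eq_square)
      moreover have "5 / 2 * (q - 3 / 2)\<^sup>2 + 3 / 8 > 0" by (simp add: add_nonneg_pos)
      ultimately have "q * (3 * m - 5 * q - 15) > 0" by linarith
      then have "3 * m - 5 * q - 15 > 0" using q by (simp add: zero_less_mult_iff)
      then show ?thesis using 1 by (simp add: c_def power2_eq_square)
    next
      case 2
      have "q * (2 * m - 8) \<ge> 3 * (q - 5 / 6)\<^sup>2 + 23 / 12"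
        using large 2 by (simp add: algebra_simps power2_eq_square)
      moreover have "3 * (q - 5 / 6)\<^sup>2 + 23 / 12 > 0" by (simp add: add_nonneg_pos)
      ultimately have "q * (2 * m - 8) > 0" by linarith
      then have "2 * m - 8 > 0" using q by (simp add: zero_less_mult_iff)
      then show ?thesis using 2 by (simp add: c_def power2_eq_square)
    next
      case 3
      have "q * (5 * m + 7 * q - 19) \<ge> 19 / 2 * (q - 33 / 38)\<^sup>2 + 1 / 2"
        using large 3 by (simp add: algebra_simps power2_eq_square)
      moreover have "19 / 2 * (q - 33 / 38)\<^sup>2 + 1 / 2 > 0" by (simp add: add_nonneg_pos)
      ultimately have "q * (5 * m + 7 * q - 19) > 0" by linarith
      then have "5 * m + 7 * q - 19 > 0" using q by (simp add: zero_less_mult_iff)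
      then show ?thesis using 3 by (simp add: c_def power2_eq_square)
    next
      case 4
      then have s5: "real s \<ge> 5" by simp
      have "(2 * real s - 3) * m \<ge> 2 * real s - 3" using s5 m by simp
      moreover have "((real s)\<^sup>2 - 9) * q \<ge> (real s)\<^sup>2 - 9"
        using mult_left_mono[OF q, of "(real s)\<^sup>2 - 9"] power_mono[OF s5, of 2]
        by (simp add: mult.commute)
      moreover have "(real s - 5) * (real s + 3) \<ge> 0" using s5 by simp
      ultimately have "c \<ge> real s * m"
        unfolding c_def by (simp add: algebra_simps power2_eq_square)
      then show ?thesis by simp
    qed
  qed
  moreover have "real s * q \<ge> 0" using q by simp
  then have X: "X > m" "X > real s" using q m unfolding X_def by linarith+
  have s_pos: "real s > 0" using s by simp
  ultimately have "X * c > (real s)\<^sup>2 * m"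
  proof (elim disjE)
    assume "c \<ge> (real s)\<^sup>2"
    then have "X * c \<ge> X * (real s)\<^sup>2" using X m by (intro mult_left_mono) auto
    moreover have "X * (real s)\<^sup>2 > m * (real s)\<^sup>2" using X s_pos by simp
    ultimately show ?thesis by (simp add: mult.commute)
  next
    assume "c \<ge> real s * m"
    then have "X * c \<ge> X * (real s * m)" using X m by (intro mult_left_mono) auto
    moreover have "X * (real s * m) > real s * (real s * m)" using X s_pos m by simp
    ultimately show ?thesis by (simp add: power2_eq_square mult.assoc)
  qed
  then show ?thesis unfolding c_def X_def by (simp add: algebra_simps)
qed

lemma quotient_poly_at_shift_neg:
  fixes q :: real
  assumes k: "real k = real s * q" and "s \<ge> 2" "q \<ge> 1" "m \<ge> 1"
    and large: "2 * q * (real s + real m + real k) \<ge> 4 + 9 * q + 9 * q\<^sup>2"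
  shows "quotient_poly s m k (real s + real m + real k + 3 * q) < 0"
proof -
  have "(real s + real m + real s * q + 3 * q)
          * (3 + 4 * real s + 9 * q - (real s)\<^sup>2 * q - 3 * (real s - 1) * real m)
        + (real s)\<^sup>2 * real m < 0"
    by (rule shift_cofactor_neg) (use assms in auto)
  then show ?thesis
    unfolding quotient_poly_at_shift[OF k] unfolding k using assms(3) by (simp add: mult_pos_neg)
qed

lemma quotient_poly_at_shift_pos:
  assumes "k \<ge> 1"
  shows "quotient_poly 1 m k (1 + real m + 4 * real k) > 0"
proof -
  have "quotient_poly 1 m k (1 + real m + 4 * real k)
      = real k * ((1 + real m + 4 * real k) * (7 + 8 * real k) + real m)"
    using quotient_poly_at_shift[of k 1 "real k" m] by (simp add: algebra_simps)
  moreover have "(1 + real m + 4 * real k) * (7 + 8 * real k) + real m > 0"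
    by (intro add_pos_nonneg mult_pos_pos) auto
  ultimately show ?thesis using assms by simp
qed

lemma lambda1_D_join_lt:
  fixes n s q :: nat
  assumes q: "q \<ge> 1" and s: "s \<ge> 2" and ns: "n \<ge> s + s * q + 1"
    and large: "2 * real q * real n \<ge> 4 + 9 * real q + 9 * (real q)\<^sup>2"
  shows "lambda1 (D_join 1 (n - 1 - q) q) < lambda1 (D_join s (n - s - s * q) (s * q))"
proof -
  have nq: "n \<ge> q + 2"
  proof (rule ccontr)
    assume "\<not> ?thesis"
    then have "real n \<le> real q + 1" by simp
    then have "2 * real q * real n \<le> 2 * real q * (real q + 1)" using q by simp
    also have "\<dots> = 2 * (real q)\<^sup>2 + 2 * real q" by (simp add: algebra_simps power2_eq_square)
    finally show False using large zero_le_power2[of "real q"] by linarith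
  qed
  define m1 where "m1 = n - 1 - q"
  define m2 where "m2 = n - s - s * q"
  define X where "X = real n + 3 * real q"
  have m1: "m1 \<ge> 1" and m2: "m2 \<ge> 1" using nq ns unfolding m1_def m2_def by simp_all
  have n1: "real n = 1 + real m1 + real q" using nq by (simp add: m1_def)
  have n2: "real n = real s + real m2 + real s * real q" using ns by (simp add: m2_def)
  have "lambda1 (D_join 1 m1 q) \<le> X - 1"
  proof (rule lambda1_D_join_le)
    have "X = 1 + real m1 + 4 * real q" by (simp add: X_def n1)
    then show "quotient_poly 1 m1 q X \<ge> 0"
      using less_imp_le[OF quotient_poly_at_shift_pos[OF q, of m1]] by simp
  qed (use m1 q in \<open>simp_all add: X_def n1\<close>)
  moreover have "X - 1 < lambda1 (D_join s m2 (s * q))"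
  proof (rule lambda1_D_join_gt)
    have "X = real s + real m2 + real (s * q) + 3 * real q" by (simp add: X_def n2)
    moreover have "quotient_poly s m2 (s * q) (real s + real m2 + real (s * q) + 3 * real q) < 0"
      by (rule quotient_poly_at_shift_neg) (use s q m2 large[unfolded n2] in auto)
    ultimately show "quotient_poly s m2 (s * q) X < 0" by simp
  qed (use s q m2 in simp_all)
  ultimately show ?thesis unfolding m1_def m2_def by linarith
qed

theorem mainTheorem7:
  fixes t :: real and n s :: nat
  assumes "t > 0"
    and "1 / t \<in> \<nat>"
    and "real n \<ge> 2 * t + 9 / (2 * t) + 9 / 2"
    and "s \<ge> 2"
    and "real s / t \<in> \<int>"
    and "real n \<ge> real s + real s / t + 1"
  shows "lambda1 (D_join 1 (nat \<lfloor>real n - 1 - 1 / t\<rfloor>) (nat \<lfloor>1 / t\<rfloor>))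
       < lambda1 (D_join s (nat \<lfloor>real n - real s - real s / t\<rfloor>) (nat \<lfloor>real s / t\<rfloor>))"
proof -
  obtain q :: nat where q: "1 / t = real q" using assms(2) by (auto elim: Nats_cases)
  have "real q > 0" unfolding q[symmetric] using assms(1) by simp
  then have q1: "q \<ge> 1" by simp
  have t: "t = 1 / real q" unfolding q[symmetric] by simp
  have st: "real s / t = real (s * q)" by (simp add: t)
  have ns: "n \<ge> s + s * q + 1" using assms(6) unfolding st by linarith
  have "2 * real q * real n \<ge> 2 * real q * (2 / real q + 9 * real q / 2 + 9 / 2)"
    using assms(3) q1 unfolding t by (intro mult_left_mono) (auto simp: field_simps)
  also have "2 * real q * (2 / real q + 9 * real q / 2 + 9 / 2) = 4 + 9 * real q + 9 * (real q)\<^sup>2"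
    using q1 by (simp add: field_simps power2_eq_square)
  finally have large: "2 * real q * real n \<ge> 4 + 9 * real q + 9 * (real q)\<^sup>2" .
  have "q \<le> s * q" using assms(4) by simp
  with ns have "q + 1 \<le> n" by linarith
  have "real n - 1 - 1 / t = real (n - 1 - q)" "real n - real s - real s / t = real (n - s - s * q)"
    using ns \<open>q + 1 \<le> n\<close> unfolding q st by (simp_all add: of_nat_diff)
  then show ?thesis
    unfolding q st using lambda1_D_join_lt[OF q1 assms(4) ns large] by (simp only: floor_of_nat nat_int)
qed

end
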